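(* Let $r\geq 2$ be an integer and $m=rn$. Let $G=(A,B,E)$ be sampled from the Erdős–Rényi random bipartite graph distribution $\mathcal{G}(n,m,p)$ with $p\geq\frac{64\log m}{n}$. Then, with high probability, for all subsets $S\subseteq A$ and $T\subseteq B$ with $|T|=m-r|S|+1$, we have $|E_G(S,T)|>(16\log m)\cdot\min\{|S|,|T|\}$.
   Context: $\mathcal{G}(a,b,p)$ denotes the random bipartite graph with left vertex set $A$ of size $a$, right vertex set $B$ of size $b$, where each pair $(x,y)\in A\times B$ is an edge independently with probability $p$. $E_G(S,T)$ is the set of edges of $G$ between a vertex of $S$ and a vertex of $T$. $\log$ is natural. "With high probability" means with probability tending to 1 as $n\to\infty$. *)

theory Defs
  imports "HOL-Probability.Probability"
begin

text \<open>Random bipartite graph G(a,b,p): left vertices {0..<a}, right vertices {0..<b};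
  a graph is its edge set, a subset of {0..<a} \<times> {0..<b}; each pair is an edge
  independently with probability p.\<close>
definition random_bipartite :: "nat \<Rightarrow> nat \<Rightarrow> real \<Rightarrow> (nat \<times> nat) set pmf" where
  "random_bipartite a b p =
     map_pmf (\<lambda>f. {e \<in> {0..<a} \<times> {0..<b}. f e})
       (Pi_pmf ({0..<a} \<times> {0..<b}) False (\<lambda>_. bernoulli_pmf p))"

definition edges_between :: "(nat \<times> nat) set \<Rightarrow> nat set \<Rightarrow> nat set \<Rightarrow> (nat \<times> nat) set" where
  "edges_between E S T = E \<inter> (S \<times> T)"

end

(* A cut (S, T) with |S| = s has |T| = t = m - r s + 1, where m = r n, and |E(S, T)| is
   binomially distributed with parameters s t and p.  Weighting the outcome k by 2^(a - k) gives
   P(Bin(N, p) <= a) <= 2^a (1 - p/2)^N <= exp (3a/4 - pN/2).  There are at most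
   C(n, s) C(m, t) <= m^(min(s, n - s) + min(t, m - t)) cuts with |S| = s, and p >= 64 ln m / n
   makes pst/2 >= 32 st ln m / n, which beats both this count and the Chernoff threshold
   12 min(s, t) ln m with a factor m^-2 to spare (separately for s <= n/2 and s > n/2).
   Summing over s, the failure probability is at most n / m^2 <= 1/n. *)

theory Submission imports Defs begin

lemma ln_2_le_three_quarters: "ln (2::real) \<le> 3/4"
proof -
  have "(2::real) \<le> 1 + 3/4 + (3/4)\<^sup>2/2" by (simp add: power2_eq_square)
  also have "\<dots> \<le> exp (3/4)" by (rule exp_lower_Taylor_quadratic) simp
  finally have "ln (2::real) \<le> ln (exp (3/4))"
    by (subst ln_le_cancel_iff) auto
  then show ?thesis by simp
qed

lemma prob_binomial_pmf_le_moment_bound: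
  fixes p q a :: real
  assumes p: "p \<in> {0..1}" and q: "0 < q" "q \<le> 1"
  shows "measure_pmf.prob (binomial_pmf N p) {k. real k \<le> a} \<le> (1 - p + p * q) ^ N / q powr a"
proof -
  let ?M = "binomial_pmf N p"
  have "measure_pmf.prob ?M {k. real k \<le> a} = measure_pmf.prob ?M ({k. real k \<le> a} \<inter> set_pmf ?M)"
    by (simp add: measure_Int_set_pmf)
  also have "\<dots> \<le> measure_pmf.prob ?M {k\<in>{..N}. real k \<le> a}"
    using p by (intro measure_pmf.finite_measure_mono) (auto simp: set_pmf_binomial_eq)
  also have "\<dots> = (\<Sum>k\<in>{k\<in>{..N}. real k \<le> a}. pmf ?M k)"
    by (simp add: measure_measure_pmf_finite)
  also have "\<dots> \<le> (\<Sum>k\<in>{k\<in>{..N}. real k \<le> a}. pmf ?M k * (q ^ k / q powr a))"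
  proof (rule sum_mono)
    fix k assume "k \<in> {k\<in>{..N}. real k \<le> a}"
    then have "q powr a \<le> q powr real k"
      using q by (intro powr_mono') auto
    then have "1 \<le> q ^ k / q powr a"
      using q by (simp add: powr_realpow)
    then show "pmf ?M k \<le> pmf ?M k * (q ^ k / q powr a)"
      using mult_left_mono[of 1 "q ^ k / q powr a" "pmf ?M k"] by simp
  qed
  also have "\<dots> \<le> (\<Sum>k\<le>N. pmf ?M k * (q ^ k / q powr a))"
    using q by (intro sum_mono2) auto
  also have "\<dots> = (\<Sum>k\<le>N. of_nat (N choose k) * (p * q) ^ k * (1 - p) ^ (N - k)) / q powr a"
    using p by (simp add: sum_divide_distrib power_mult_distrib algebra_simps)
  also have "\<dots> = (1 - p + p * q) ^ N / q powr a"
    using binomial_ring[of "p * q" "1 - p" N] by (simp add: add.commute)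
  finally show ?thesis .
qed

lemma prob_binomial_pmf_le_exp_bound:
  fixes p a :: real
  assumes p: "p \<in> {0..1}" and a: "0 \<le> a"
  shows "measure_pmf.prob (binomial_pmf N p) {k. real k \<le> a} \<le> exp (3/4 * a - p * N / 2)"
proof -
  have "measure_pmf.prob (binomial_pmf N p) {k. real k \<le> a} \<le> (1 - p / 2) ^ N * 2 powr a"
    using prob_binomial_pmf_le_moment_bound[OF p, where q = "1/2"] by (simp add: powr_divide)
  also have "\<dots> \<le> exp (- p / 2) ^ N * exp (3/4 * a)"
  proof (rule mult_mono)
    show "(1 - p / 2) ^ N \<le> exp (- p / 2) ^ N"
      using p exp_ge_add_one_self[of "- p / 2"] by (intro power_mono) auto
    show "2 powr a \<le> exp (3/4 * a)"
      using mult_left_mono[OF ln_2_le_three_quarters a] by (simp add: powr_def mult.commute)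
  qed auto
  also have "\<dots> = exp (3/4 * a - p * N / 2)"
    by (simp add: exp_of_nat_mult[symmetric] exp_add[symmetric] algebra_simps)
  finally show ?thesis .
qed

lemma map_pmf_card_Int_random_bipartite:
  assumes D: "D \<subseteq> {0..<a} \<times> {0..<b}" and p: "p \<in> {0..1}"
  shows "map_pmf (\<lambda>E. card (E \<inter> D)) (random_bipartite a b p) = binomial_pmf (card D) p"
proof -
  let ?\<Omega> = "{0..<a} \<times> {0..<b}"
  let ?coins = "\<lambda>I. Pi_pmf I False (\<lambda>_. bernoulli_pmf p)"
  have "binomial_pmf (card D) p = map_pmf (\<lambda>f. card {x\<in>D. f x}) (?coins D)"
    using D p by (intro binomial_pmf_altdef') (auto intro: finite_subset)
  also have "?coins D = map_pmf (\<lambda>f x. if x \<in> D then f x else False) (?coins ?\<Omega>)"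
    using D by (intro Pi_pmf_subset) auto
  also have "map_pmf (\<lambda>f. card {x\<in>D. f x}) \<dots> = map_pmf (\<lambda>E. card (E \<inter> D)) (random_bipartite a b p)"
    unfolding random_bipartite_def map_pmf_comp
    using D by (intro map_pmf_cong refl arg_cong[where f = card]) auto
  finally show ?thesis ..
qed

lemma prob_random_bipartite_card_Int_le:
  assumes D: "D \<subseteq> {0..<a} \<times> {0..<b}" and p: "p \<in> {0..1}" and c: "0 \<le> c"
  shows "measure_pmf.prob (random_bipartite a b p) {E. real (card (E \<inter> D)) \<le> c}
           \<le> exp (3/4 * c - p * card D / 2)"
proof -
  have "measure_pmf.prob (random_bipartite a b p) {E. real (card (E \<inter> D)) \<le> c}
      = measure_pmf.prob (map_pmf (\<lambda>E. card (E \<inter> D)) (random_bipartite a b p)) {k. real k \<le> c}"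
    by (simp add: vimage_def)
  also have "\<dots> \<le> exp (3/4 * c - p * card D / 2)"
    unfolding map_pmf_card_Int_random_bipartite[OF D p]
    using p c by (rule prob_binomial_pmf_le_exp_bound)
  finally show ?thesis .
qed

lemma binomial_le_power_min: "n choose k \<le> n ^ min k (n - k)"
proof (cases "k \<le> n")
  case True
  show ?thesis
  proof (cases "k \<le> n - k")
    case True
    then show ?thesis by (simp add: binomial_le_pow min_absorb1)
  next
    case False
    have "n choose k = n choose (n - k)" using \<open>k \<le> n\<close> by (rule binomial_symmetric)
    also have "\<dots> \<le> n ^ (n - k)" by (rule binomial_le_pow) simp
    finally show ?thesis using False by (simp add: min_absorb2)
  qed
qed (simp add: binomial_eq_0)

lemma cut_size_exponent_bound:
  fixes r n s t :: nat
  assumes r: "2 \<le> r" and s: "1 \<le> s" "s \<le> n" and t: "t = r * n - r * s + 1"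
  shows "real (min s (n - s) + min t (r * n - t)) + 12 * real (min s t) + 2
           \<le> 32 * real s * real t / real n"
proof -
  have rs: "r * s \<le> r * n" "2 * s \<le> r * s" using r s by simp_all
  have n: "real n > 0" using s by simp
  show ?thesis
  proof (cases "2 * s \<le> n")
    case True
    then have "2 * (r * s) \<le> r * n" by (metis mult.left_commute mult_le_mono2)
    then have rt: "r * n \<le> 2 * t" using t by linarith
    then have "real s * (16 * real (r * n)) \<le> real s * (32 * real t)"
      by (intro mult_left_mono) (simp_all flip: of_nat_mult)
    then have "16 * real (r * s) \<le> 32 * real s * real t / real n"
      using n by (simp add: field_simps)
    moreover have "min s (n - s) = s" "min s t = s"
      using True rt s mult_le_mono1[OF r, of n] by linarith+
    moreover have "real (min t (r * n - t)) + 1 \<le> real (r * s)"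
      using t rs s by linarith
    moreover have "2 * real s \<le> real (r * s)"
      using rs(2) by linarith
    ultimately show ?thesis using s by (simp only: of_nat_add)
  next
    case False
    have "real t * (16 * real n) \<le> real t * (32 * real s)"
      using False by (intro mult_left_mono) simp_all
    then have "16 * real t \<le> 32 * real s * real t / real n"
      using n by (simp add: field_simps)
    moreover have "2 * (n - s) + 1 \<le> t"
      using r t rs by (simp add: diff_mult_distrib2[symmetric])
    ultimately show ?thesis using False by (simp add: min_def)
  qed
qed

lemma choose_mul_choose_mul_exp_le:
  fixes r n s t :: nat and p L :: real
  assumes r: "2 \<le> r" and s: "1 \<le> s" "s \<le> n" and t: "t = r * n - r * s + 1"
    and L: "L = ln (real (r * n))" and p: "64 * L / real n \<le> p"
  shows "real (n choose s) * real ((r * n) choose t)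
           * exp (12 * L * real (min s t) - p * real (s * t) / 2) \<le> exp (-2 * L)"
proof -
  define m where "m = r * n"
  define e where "e = min s (n - s) + min t (m - t)"
  have "n \<le> m" using r by (simp add: m_def)
  then have m: "real m \<ge> 1" using s by linarith
  have Lm: "L = ln (real m)" using L by (simp add: m_def)
  have L0: "0 \<le> L" using m by (simp add: Lm)
  have "(n choose s) * (m choose t) \<le> m ^ min s (n - s) * m ^ min t (m - t)"
  proof (rule mult_mono)
    show "n choose s \<le> m ^ min s (n - s)"
      using binomial_le_power_min[of n s] power_mono[OF \<open>n \<le> m\<close>] order_trans by blast
  qed (simp_all add: binomial_le_power_min)
  then have "real (n choose s) * real (m choose t) \<le> real m ^ e"
    unfolding e_def power_add by (simp flip: of_nat_mult of_nat_power)
  also have "\<dots> = exp (real e * L)"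
    using m by (simp add: Lm exp_of_nat_mult)
  finally have count: "real (n choose s) * real (m choose t) \<le> exp (real e * L)" .
  have "L * (32 * real s * real t / real n) \<le> p * real (s * t) / 2"
    using mult_right_mono[OF p, of "real (s * t)"] by (simp add: field_simps)
  moreover have "L * (real e + 12 * real (min s t) + 2) \<le> L * (32 * real s * real t / real n)"
    using mult_left_mono[OF cut_size_exponent_bound[OF r s t] L0] by (simp add: e_def m_def)
  ultimately have exponent: "real e * L + (12 * L * real (min s t) - p * real (s * t) / 2) \<le> -2 * L"
    by (simp only: ring_distribs mult.commute[of "real e"] mult.assoc)
  have "real (n choose s) * real (m choose t) * exp (12 * L * real (min s t) - p * real (s * t) / 2)
      \<le> exp (real e * L) * exp (12 * L * real (min s t) - p * real (s * t) / 2)"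
    using count by (rule mult_right_mono) simp
  also have "\<dots> \<le> exp (-2 * L)"
    using exponent by (simp flip: exp_add)
  finally show ?thesis unfolding m_def .
qed

definition sparse_cut :: "real \<Rightarrow> nat set \<Rightarrow> nat set \<Rightarrow> (nat \<times> nat) set set" where
  "sparse_cut c S T = {E. real (card (edges_between E S T)) \<le> c * real (min (card S) (card T))}"

definition dense_cuts :: "nat \<Rightarrow> nat \<Rightarrow> real \<Rightarrow> (nat \<times> nat) set set" where
  "dense_cuts n r c = {E. \<forall>S \<subseteq> {0..<n}. \<forall>T \<subseteq> {0..<r * n}.
     card T = r * n - r * card S + 1 \<longrightarrow>
     real (card (edges_between E S T)) > c * real (min (card S) (card T))}"

definition sparse_cuts_of_size :: "nat \<Rightarrow> nat \<Rightarrow> real \<Rightarrow> nat \<Rightarrow> (nat \<times> nat) set set" where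
  "sparse_cuts_of_size n r c s =
     (\<Union>S\<in>{S. S \<subseteq> {0..<n} \<and> card S = s}.
        \<Union>T\<in>{T. T \<subseteq> {0..<r * n} \<and> card T = r * n - r * s + 1}. sparse_cut c S T)"

lemma compl_dense_cuts_subset: "- dense_cuts n r c \<subseteq> (\<Union>s\<in>{1..n}. sparse_cuts_of_size n r c s)"
proof
  fix E assume "E \<in> - dense_cuts n r c"
  then obtain S T where S: "S \<subseteq> {0..<n}" and T: "T \<subseteq> {0..<r * n}"
    and card_T: "card T = r * n - r * card S + 1" and "E \<in> sparse_cut c S T"
    unfolding dense_cuts_def sparse_cut_def by auto
  moreover have "card S \<le> n" "card T \<le> r * n"
    using card_mono[OF _ S] card_mono[OF _ T] by simp_all
  then have "card S \<in> {1..n}"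
    using card_T by (cases "card S = 0") auto
  ultimately show "E \<in> (\<Union>s\<in>{1..n}. sparse_cuts_of_size n r c s)"
    unfolding sparse_cuts_of_size_def by blast
qed

lemma prob_sparse_cuts_of_size_le:
  fixes r n s :: nat and p L :: real
  assumes r: "2 \<le> r" and s: "1 \<le> s" "s \<le> n" and L: "L = ln (real (r * n))"
    and p: "64 * L / real n \<le> p" "p \<le> 1"
  shows "measure_pmf.prob (random_bipartite n (r * n) p) (sparse_cuts_of_size n r (16 * L) s)
           \<le> exp (-2 * L)"
proof -
  define M where "M = random_bipartite n (r * n) p"
  define t where "t = r * n - r * s + 1"
  define SS where "SS = {S. S \<subseteq> {0..<n} \<and> card S = s}"
  define TT where "TT = {T. T \<subseteq> {0..<r * n} \<and> card T = t}"
  define bound where "bound = exp (12 * L * real (min s t) - p * real (s * t) / 2)"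
  have "1 \<le> r * n" using r s by (simp add: Suc_le_eq)
  then have L0: "0 \<le> L" unfolding L by (intro ln_ge_zero) linarith
  then have p01: "p \<in> {0..1}" using p by (auto intro: order_trans[rotated])
  have sparse: "measure_pmf.prob M (sparse_cut (16 * L) S T) \<le> bound" if "S \<in> SS" "T \<in> TT" for S T
  proof -
    have "S \<times> T \<subseteq> {0..<n} \<times> {0..<r * n}" "card S = s" "card T = t"
      using that by (auto simp: SS_def TT_def)
    then show ?thesis
      using prob_random_bipartite_card_Int_le[of "S \<times> T" n "r * n" p "16 * L * real (min s t)"] p01 L0
      by (simp add: M_def bound_def sparse_cut_def edges_between_def card_cartesian_product mult.assoc)
  qed
  have "measure_pmf.prob M (\<Union>S\<in>SS. \<Union>T\<in>TT. sparse_cut (16 * L) S T)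
      \<le> (\<Sum>S\<in>SS. measure_pmf.prob M (\<Union>T\<in>TT. sparse_cut (16 * L) S T))"
    by (rule measure_pmf.finite_measure_subadditive_finite) (auto simp: SS_def)
  also have "\<dots> \<le> (\<Sum>S\<in>SS. \<Sum>T\<in>TT. measure_pmf.prob M (sparse_cut (16 * L) S T))"
    by (intro sum_mono measure_pmf.finite_measure_subadditive_finite) (auto simp: TT_def)
  also have "\<dots> \<le> (\<Sum>S\<in>SS. \<Sum>T\<in>TT. bound)"
    by (intro sum_mono sparse)
  also have "\<dots> = real (n choose s) * real ((r * n) choose t) * bound"
    by (simp add: SS_def TT_def n_subsets)
  also have "\<dots> \<le> exp (-2 * L)"
    unfolding bound_def using r s t_def L p(1) by (rule choose_mul_choose_mul_exp_le)
  finally show ?thesis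
    by (simp add: sparse_cuts_of_size_def M_def SS_def TT_def t_def)
qed

lemma prob_dense_cuts_ge:
  fixes r n :: nat and p :: real
  assumes r: "2 \<le> r" and n: "1 \<le> n"
    and p: "64 * ln (real (r * n)) / real n \<le> p" "p \<le> 1"
  shows "1 - 1 / real n
           \<le> measure_pmf.prob (random_bipartite n (r * n) p) (dense_cuts n r (16 * ln (real (r * n))))"
proof -
  define L where "L = ln (real (r * n))"
  define M where "M = random_bipartite n (r * n) p"
  have "measure_pmf.prob M (- dense_cuts n r (16 * L))
      \<le> measure_pmf.prob M (\<Union>s\<in>{1..n}. sparse_cuts_of_size n r (16 * L) s)"
    by (intro measure_pmf.finite_measure_mono compl_dense_cuts_subset) simp
  also have "\<dots> \<le> (\<Sum>s\<in>{1..n}. measure_pmf.prob M (sparse_cuts_of_size n r (16 * L) s))"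
    by (rule measure_pmf.finite_measure_subadditive_finite) auto
  also have "\<dots> \<le> (\<Sum>s\<in>{1..n}. exp (-2 * L))"
    unfolding M_def using r L_def p by (intro sum_mono prob_sparse_cuts_of_size_le) auto
  also have "\<dots> = real n / real (r * n) ^ 2"
  proof -
    have "exp L = real (r * n)"
      unfolding L_def using r n by (intro exp_ln) simp
    moreover have "exp (-2 * L) = 1 / exp L ^ 2"
      by (simp add: exp_minus divide_inverse flip: exp_of_nat_mult)
    ultimately show ?thesis by simp
  qed
  also have "\<dots> \<le> 1 / real n"
    using r n mult_mono[of 1 "real r" 1 "real r"] by (simp add: field_simps power2_eq_square)
  finally have "measure_pmf.prob M (- dense_cuts n r (16 * L)) \<le> 1 / real n" .
  moreover have "measure_pmf.prob M (- dense_cuts n r (16 * L))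
      = 1 - measure_pmf.prob M (dense_cuts n r (16 * L))"
    using measure_pmf.prob_compl[of "dense_cuts n r (16 * L)" M] by (simp add: Compl_eq_Diff_UNIV)
  ultimately show ?thesis
    unfolding M_def L_def by linarith
qed

theorem lemma3:
  fixes r :: nat and p :: "nat \<Rightarrow> real"
  assumes "r \<ge> 2"
    and "eventually (\<lambda>n. 64 * ln (real (r * n)) / real n \<le> p n \<and> p n \<le> 1) sequentially"
  shows "(\<lambda>n. measure_pmf.prob (random_bipartite n (r * n) (p n))
            {E. \<forall>S \<subseteq> {0..<n}. \<forall>T \<subseteq> {0..<r * n}.
                  card T = r * n - r * card S + 1 \<longrightarrow>
                  real (card (edges_between E S T))
                    > 16 * ln (real (r * n)) * real (min (card S) (card T))})
         \<longlonglongrightarrow> 1"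
proof -
  define P where
    "P n = measure_pmf.prob (random_bipartite n (r * n) (p n)) (dense_cuts n r (16 * ln (real (r * n))))"
    for n
  have "eventually (\<lambda>n. 1 - 1 / real n \<le> P n) sequentially"
    using assms(2) eventually_ge_at_top[of 1]
  proof eventually_elim
    case (elim n)
    then show ?case
      unfolding P_def by (intro prob_dense_cuts_ge[OF assms(1)]) simp_all
  qed
  moreover have "eventually (\<lambda>n. P n \<le> 1) sequentially"
    by (simp add: P_def)
  moreover have "(\<lambda>n. 1 - 1 / real n) \<longlonglongrightarrow> (1::real)"
    using tendsto_diff[OF tendsto_const lim_1_over_n] by simp
  ultimately have "P \<longlonglongrightarrow> 1"
    by (rule tendsto_sandwich[OF _ _ _ tendsto_const])
  then show ?thesis
    unfolding P_def dense_cuts_def .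
qed

end
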